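(* Let $P(z) \in \mathbb{C}[z, z^{-1}]$ be a non-zero Laurent polynomial, possibly with repeated roots, and let $z_1,\dots,z_n$ be the distinct roots of $P$. For each positive integer $k$ let \[ m_k(P) = \int_0^1 \log^k \left| P\left(e^{2\pi i t}\right)\right| \, dt. \] Then \[ \lim_{k\to\infty} \frac{|m_k(P)|}{k!} = \frac{1}{\pi} \sum_{z_j \in S^1} \frac{1}{|P'(z_j)|}, \] where $S^1=\{z\in\mathbb{C}: |z|=1\}$, $P'$ is the derivative of $P$ with respect to $z$, the sum is over those distinct roots $z_j$ lying on $S^1$ (an empty sum being $0$), and the right-hand side is interpreted as $\infty$ if $P'(z_j)=0$ for some root $z_j \in S^1$ (i.e., if $P$ has a repeated root on $S^1$), in which case the limit on the left is $+\infty$.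
   Context: $m_k(P)$ is called the $k$-higher Mahler measure of $P$; $\log^k x$ means $(\log x)^k$. *)

theory Defs
  imports "HOL-Analysis.Analysis" "HOL-Computational_Algebra.Polynomial"
begin

text \<open>A Laurent polynomial in \<open>\<complex>[z, z\<inverse>]\<close> is represented as \<open>z powi e * Q(z)\<close>
  with \<open>Q\<close> an ordinary complex polynomial and \<open>e\<close> an integer shift.\<close>
definition laurent_eval :: "complex poly \<Rightarrow> int \<Rightarrow> complex \<Rightarrow> complex" where
  "laurent_eval Q e z = z powi e * poly Q z"

definition higher_mahler :: "nat \<Rightarrow> (complex \<Rightarrow> complex) \<Rightarrow> real" where
  "higher_mahler k P = integral {0..1} (\<lambda>t::real. (ln (cmod (P (cis (2 * pi * t))))) ^ k)"

end

theory Submission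
  imports Defs
begin

(* Write g t = |P (exp (2 pi i t))| and let t_j parametrise the roots z_j of P on the unit circle,
   so that |m_k(P)| = |integral over one period of (- ln g) ^ k|.  The model integral
   over |x| <= d of (- ln (B |x|)) ^ k equals 2 d k! e_k(y), with e_k the k-th Taylor polynomial of
   exp and y = - ln (B d); divided by k! it tends to 2 d exp y = 2 / B, whatever d is.  Near a
   simple root g t ~ A_j |t - t_j| with A_j = 2 pi |P'(z_j)|, and away from the roots ln g is
   bounded by some C, which only contributes C ^ k / k! -> 0.  Squeezing g between
   (A_j -+ eps) |t - t_j| on small windows therefore gives |m_k(P)| / k! -> sum 2 / A_j.  At a
   multiple root A_j = 0, so g t <= eta |t - t_j| for every eta > 0 and the quotient is eventually
   larger than 2 / eta. *)

section \<open>Integrals of powers of a logarithmic singularity\<close>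

definition exp_taylor :: "nat \<Rightarrow> real \<Rightarrow> real" where
  "exp_taylor k y = (\<Sum>i\<le>k. y ^ i / fact i)"

lemma exp_taylor_Suc: "exp_taylor (Suc k) y = exp_taylor k y + y ^ Suc k / fact (Suc k)"
  by (simp add: exp_taylor_def)

lemma exp_taylor_has_real_derivative:
  "(exp_taylor k has_real_derivative exp_taylor k y - y ^ k / fact k) (at y)"
proof (induction k)
  case 0
  show ?case by (simp add: exp_taylor_def)
next
  case (Suc k)
  have "((\<lambda>y. y ^ Suc k) has_real_derivative real (Suc k) * y ^ k) (at y)"
    using DERIV_pow[of "Suc k" y] by simp
  from DERIV_add[OF Suc DERIV_cdivide[OF this, of "fact (Suc k)"]]
  have "(exp_taylor (Suc k) has_real_derivative
          exp_taylor k y - y ^ k / fact k + real (Suc k) * y ^ k / fact (Suc k)) (at y)"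
    by (simp add: exp_taylor_Suc[abs_def])
  moreover have "exp_taylor k y - y ^ k / fact k + real (Suc k) * y ^ k / fact (Suc k) =
                 exp_taylor (Suc k) y - y ^ Suc k / fact (Suc k)"
    by (simp add: exp_taylor_Suc)
  ultimately show ?case by simp
qed

lemma exp_taylor_tendsto_exp: "(\<lambda>k. exp_taylor k y) \<longlonglongrightarrow> exp y"
  using exp_converges[of y] by (simp add: exp_taylor_def sums_def_le field_simps)

lemma exp_taylor_over_exp_tendsto_0: "((\<lambda>y. exp_taylor k y / exp y) \<longlongrightarrow> 0) at_top"
proof -
  have "((\<lambda>y::real. \<Sum>i\<le>k. y ^ i / exp y / fact i) \<longlongrightarrow> (\<Sum>i\<le>k. 0)) at_top"
    by (intro tendsto_sum tendsto_divide_zero tendsto_power_div_exp_0)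
  then show ?thesis unfolding exp_taylor_def sum_divide_distrib by (simp add: mult.commute)
qed

lemma filterlim_neg_ln_at_right_0:
  assumes "B > (0::real)"
  shows "filterlim (\<lambda>x. - ln (B * x)) at_top (at_right 0)"
proof -
  have "filterlim (\<lambda>x. B * x) (at_right 0) (at_right (0::real))"
  proof (rule tendsto_imp_filterlim_at_right)
    show "((\<lambda>x. B * x) \<longlongrightarrow> 0) (at_right 0)"
      by (auto intro!: tendsto_eq_intros)
    show "\<forall>\<^sub>F x in at_right 0. 0 < B * x"
      using eventually_at_right_less[of 0] by eventually_elim (use assms in simp)
  qed
  then show ?thesis
    by (simp add: filterlim_uminus_at_top filterlim_compose[OF ln_at_0])
qed

lemma has_integral_neg_ln_power:
  assumes B: "B > 0" and d: "d > 0"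
  shows "((\<lambda>x. (- ln (B * x)) ^ k) has_integral d * fact k * exp_taylor k (- ln (B * d))) {0..d}"
proof -
  \<comment> \<open>The derivative of the Taylor polynomial telescopes, so \<open>G\<close> is an antiderivative.\<close>
  define G where "G x = x * fact k * exp_taylor k (- ln (B * x))" for x
  have G_at_0: "(G \<longlongrightarrow> G 0) (at_right 0)"
  proof -
    have "((\<lambda>x. fact k * (exp_taylor k (- ln (B * x)) / exp (- ln (B * x))) / B)
            \<longlongrightarrow> fact k * 0 / B) (at_right 0)"
      by (intro tendsto_intros filterlim_compose[OF exp_taylor_over_exp_tendsto_0]
          filterlim_neg_ln_at_right_0[OF B]) (use B in simp)
    moreover have "\<forall>\<^sub>F x in at_right 0.
        fact k * (exp_taylor k (- ln (B * x)) / exp (- ln (B * x))) / B = G x"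
      using eventually_at_right_less[of 0]
      by eventually_elim (use B in \<open>simp add: G_def exp_minus field_simps\<close>)
    ultimately show ?thesis by (simp add: G_def[abs_def] tendsto_cong)
  qed
  have G_deriv: "(G has_real_derivative (- ln (B * x)) ^ k) (at x)" if "x > 0" for x
  proof -
    define y where "y = - ln (B * x)"
    have "(G has_real_derivative
            fact k * exp_taylor k y + x * fact k * ((exp_taylor k y - y ^ k / fact k) * - (B / (B * x))))
          (at x)"
      unfolding G_def y_def
      by (rule derivative_eq_intros DERIV_chain2[OF exp_taylor_has_real_derivative] refl
          | use that B in simp)+
    also have "fact k * exp_taylor k y + x * fact k * ((exp_taylor k y - y ^ k / fact k) * - (B / (B * x)))
               = y ^ k"
      using that B by (simp add: field_simps)
    finally show ?thesis unfolding y_def .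
  qed
  have "continuous_on {0..d} G"
  proof (rule continuous_on_IccI)
    show "(G \<longlongrightarrow> G d) (at_left d)"
      using DERIV_isCont[OF G_deriv] d by (auto simp: isCont_def filterlim_at_split)
    show "G \<midarrow>x\<rightarrow> G x" if "0 < x" "x < d" for x
      using DERIV_isCont[OF G_deriv] that by (auto simp: isCont_def)
  qed (use d G_at_0 in auto)
  then have "((\<lambda>x. (- ln (B * x)) ^ k) has_integral G d - G 0) {0..d}"
    using d G_deriv
    by (intro fundamental_theorem_of_calculus_interior)
       (auto simp: has_real_derivative_iff_has_vector_derivative)
  then show ?thesis by (simp add: G_def)
qed

definition spike_integral :: "real \<Rightarrow> real \<Rightarrow> nat \<Rightarrow> real" where
  "spike_integral B d k = 2 * d * fact k * exp_taylor k (- ln (B * d))"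

lemma has_integral_spike:
  assumes B: "B > 0" and d: "d > 0"
  shows "((\<lambda>x. (- ln (B * \<bar>x - t\<bar>)) ^ k) has_integral spike_integral B d k) {t - d..t + d}"
proof -
  let ?V = "d * fact k * exp_taylor k (- ln (B * d))"
  have right: "((\<lambda>x. (- ln (B * \<bar>x\<bar>)) ^ k) has_integral ?V) {0..d}"
    by (rule has_integral_eq[OF _ has_integral_neg_ln_power[OF B d]]) auto
  have "((\<lambda>x. (- ln (B * - x)) ^ k) has_integral ?V) {-d..0}"
    using has_integral_reflect_real[where f="\<lambda>x. (- ln (B * x)) ^ k" and i = ?V and a = 0 and b = d]
      has_integral_neg_ln_power[OF B d]
    by simp
  then have left: "((\<lambda>x. (- ln (B * \<bar>x\<bar>)) ^ k) has_integral ?V) {-d..0}"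
    by (rule has_integral_eq[rotated]) auto
  have "((\<lambda>x. (- ln (B * \<bar>x\<bar>)) ^ k) has_integral ?V + ?V) {-d..d}"
    by (rule has_integral_combine[OF _ _ left right]) (use d in auto)
  from has_integral_shift_real_ivl[OF this, of "- t"]
  show ?thesis by (simp add: spike_integral_def algebra_simps)
qed

lemma has_integral_spike_window:
  assumes "B > 0" "d > 0" "a \<le> t - d" "t + d \<le> b"
  shows "((\<lambda>x. if \<bar>x - t\<bar> \<le> d then (- ln (B * \<bar>x - t\<bar>)) ^ k else 0)
           has_integral spike_integral B d k) {a..b}"
proof -
  have "{t - d..t + d} \<inter> {a..b} = {t - d..t + d}"
    using assms by auto
  then have "((\<lambda>x. if x \<in> {t - d..t + d} then (- ln (B * \<bar>x - t\<bar>)) ^ k else 0)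
               has_integral spike_integral B d k) {a..b}"
    using has_integral_spike[OF assms(1,2)] by (simp only: has_integral_restrict_Int)
  moreover have "x \<in> {t - d..t + d} \<longleftrightarrow> \<bar>x - t\<bar> \<le> d" for x
    by auto
  ultimately show ?thesis by simp
qed

lemma spike_integral_over_fact_tendsto:
  assumes "B > 0" "d > 0"
  shows "(\<lambda>k. spike_integral B d k / fact k) \<longlonglongrightarrow> 2 / B"
proof -
  have "(\<lambda>k. 2 * d * exp_taylor k (- ln (B * d))) \<longlonglongrightarrow> 2 * d * exp (- ln (B * d))"
    by (intro tendsto_intros exp_taylor_tendsto_exp)
  moreover have "2 * d * exp (- ln (B * d)) = 2 / B"
    using assms by (simp add: exp_minus field_simps)
  moreover have "spike_integral B d k / fact k = 2 * d * exp_taylor k (- ln (B * d))" for k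
    by (simp add: spike_integral_def)
  ultimately show ?thesis by simp
qed

lemma sum_spike_integral_over_fact_tendsto:
  assumes "finite T" "\<And>t. t \<in> T \<Longrightarrow> 0 < c t" "0 < d"
  shows "(\<lambda>k. (\<Sum>t\<in>T. spike_integral (c t) d k) / fact k) \<longlonglongrightarrow> (\<Sum>t\<in>T. 2 / c t)"
  unfolding sum_divide_distrib using assms by (intro tendsto_sum spike_integral_over_fact_tendsto) auto

lemma power_over_fact_tendsto_0: "(\<lambda>k. x ^ k / fact k :: real) \<longlonglongrightarrow> 0"
  using summable_LIMSEQ_zero[OF summable_exp_generic[of x]] by (simp add: field_simps)

section \<open>Windows around the zeros\<close>

(* At a zero, Isabelle's ln 0 = 0 gives the integrand the harmless value 0 ^ k. *)
locale zero_windows =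
  fixes g :: "real \<Rightarrow> real" and a b \<delta> C :: real and T :: "real set"
  assumes nonneg: "\<And>x. 0 \<le> g x"
    and measurable: "g \<in> borel_measurable (lebesgue_on {a..b})"
    and finite_zeros: "finite T"
    and zero_iff: "\<And>x. x \<in> {a..b} \<Longrightarrow> g x = 0 \<longleftrightarrow> x \<in> T"
    and interval: "a \<le> b"
    and radius_pos: "0 < \<delta>"
    and windows_inside: "\<And>t. t \<in> T \<Longrightarrow> a \<le> t - \<delta> \<and> t + \<delta> \<le> b"
    and windows_separated: "\<And>t t'. t \<in> T \<Longrightarrow> t' \<in> T \<Longrightarrow> t \<noteq> t' \<Longrightarrow> 2 * \<delta> < \<bar>t - t'\<bar>"
    and le_1_in_windows: "\<And>t x. t \<in> T \<Longrightarrow> \<bar>x - t\<bar> \<le> \<delta> \<Longrightarrow> g x \<le> 1"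
    and bound_nonneg: "0 \<le> C"
    and ln_bounded_off_windows: "\<And>x. x \<in> {a..b} \<Longrightarrow> \<forall>t\<in>T. \<delta> < \<bar>x - t\<bar> \<Longrightarrow> \<bar>ln (g x)\<bar> \<le> C"
begin

lemma zero_on_zeros: "t \<in> T \<Longrightarrow> g t = 0"
  using zero_iff[of t] windows_inside[of t] radius_pos by auto

lemma pos_in_window: "t \<in> T \<Longrightarrow> \<bar>x - t\<bar> \<le> \<delta> \<Longrightarrow> x \<noteq> t \<Longrightarrow> 0 < g x"
  using zero_iff[of x] windows_inside[of t] windows_separated[of t x] nonneg[of x]
  by (fastforce simp: abs_le_iff)

lemma neg_ln_nonneg_in_window: "t \<in> T \<Longrightarrow> \<bar>x - t\<bar> \<le> \<delta> \<Longrightarrow> 0 \<le> - ln (g x)"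
  using le_1_in_windows[of t x] nonneg[of x] by (cases "g x = 0") auto

lemma neg_ln_power_off_windows:
  "x \<in> {a..b} \<Longrightarrow> \<forall>t\<in>T. \<delta> < \<bar>x - t\<bar> \<Longrightarrow> \<bar>(- ln (g x)) ^ k\<bar> \<le> C ^ k"
  using power_mono[OF ln_bounded_off_windows, of x k] by (simp add: power_abs)

lemma off_other_windows:
  "t \<in> T \<Longrightarrow> t' \<in> T \<Longrightarrow> t' \<noteq> t \<Longrightarrow> \<bar>x - t\<bar> \<le> \<delta> \<Longrightarrow> \<delta> < \<bar>x - t'\<bar>"
  using windows_separated[of t t'] by auto

lemma sum_windows:
  assumes "T' \<subseteq> T" "t \<in> T'" "\<bar>x - t\<bar> \<le> \<delta>"
  shows "(\<Sum>t'\<in>T'. if \<bar>x - t'\<bar> \<le> \<delta> then f t' else 0) = (f t :: real)"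
proof -
  have "finite T'"
    using assms(1) finite_zeros finite_subset by blast
  moreover have "(if \<bar>x - t'\<bar> \<le> \<delta> then f t' else 0) = 0" if "t' \<in> T' - {t}" for t'
    using off_other_windows[of t t' x] assms that by force
  ultimately show ?thesis
    using assms(2,3) by (simp add: sum.remove[of T' t] sum.neutral)
qed

lemma sum_windows_off:
  assumes "\<forall>t\<in>T'. \<delta> < \<bar>x - t\<bar>"
  shows "(\<Sum>t'\<in>T'. if \<bar>x - t'\<bar> \<le> \<delta> then f t' else 0) = (0 :: real)"
  using assms by (intro sum.neutral) force

lemma window_cases:
  obtains (near) t where "t \<in> T" "\<bar>x - t\<bar> \<le> \<delta>" | (far) "\<forall>t\<in>T. \<delta> < \<bar>x - t\<bar>"
  using not_le by blast

lemma has_integral_spikes: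
  assumes "T' \<subseteq> T" "\<And>t. t \<in> T' \<Longrightarrow> 0 < c t"
  shows "((\<lambda>x. \<Sum>t\<in>T'. if \<bar>x - t\<bar> \<le> \<delta> then (- ln (c t * \<bar>x - t\<bar>)) ^ k else 0)
           has_integral (\<Sum>t\<in>T'. spike_integral (c t) \<delta> k)) {a..b}"
  using assms finite_subset[OF assms(1) finite_zeros] radius_pos windows_inside
  by (intro has_integral_sum has_integral_spike_window) auto

lemma abs_neg_ln_power_le_in_window:
  assumes t: "t \<in> T" "\<bar>x - t\<bar> \<le> \<delta>" and "0 < r"
    and lower: "x \<noteq> t \<Longrightarrow> (r * \<bar>x - t\<bar>) ^ m \<le> g x"
  shows "\<bar>(- ln (g x)) ^ k\<bar> \<le> real m ^ k * (- ln (r * \<bar>x - t\<bar>)) ^ k"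
proof (cases "x = t")
  case True
  then show ?thesis
    using zero_on_zeros[OF t(1)] by (cases k) auto
next
  case False
  then have pos: "0 < r * \<bar>x - t\<bar>"
    using \<open>0 < r\<close> by simp
  have nonneg: "0 \<le> - ln (g x)"
    by (rule neg_ln_nonneg_in_window[OF t])
  have "- ln (g x) \<le> - ln ((r * \<bar>x - t\<bar>) ^ m)"
    using lower[OF False] zero_less_power[OF pos, of m] by simp
  also have "\<dots> = real m * - ln (r * \<bar>x - t\<bar>)"
    using pos by (simp add: ln_realpow)
  finally have le: "- ln (g x) \<le> real m * - ln (r * \<bar>x - t\<bar>)" .
  have "\<bar>(- ln (g x)) ^ k\<bar> = (- ln (g x)) ^ k"
    using nonneg by (simp only: abs_of_nonneg zero_le_power)
  also have "\<dots> \<le> (real m * - ln (r * \<bar>x - t\<bar>)) ^ k"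
    by (rule power_mono[OF le nonneg])
  also have "\<dots> = real m ^ k * (- ln (r * \<bar>x - t\<bar>)) ^ k"
    by (rule power_mult_distrib)
  finally show ?thesis .
qed

lemma spike_le_neg_ln_power_in_window:
  assumes t: "t \<in> T" "\<bar>x - t\<bar> \<le> \<delta>" and c: "0 < c" "c * \<delta> \<le> 1"
    and upper: "x \<noteq> t \<Longrightarrow> g x \<le> c * \<bar>x - t\<bar>"
  shows "(- ln (c * \<bar>x - t\<bar>)) ^ k \<le> (- ln (g x)) ^ k"
proof (cases "x = t")
  case False
  have "c * \<bar>x - t\<bar> \<le> c * \<delta>"
    using c(1) t(2) by (simp add: mult_left_mono)
  then have "c * \<bar>x - t\<bar> \<le> 1"
    using c(2) by linarith
  then have "0 \<le> - ln (c * \<bar>x - t\<bar>)"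
    using c(1) False by simp
  moreover have "- ln (c * \<bar>x - t\<bar>) \<le> - ln (g x)"
    using upper[OF False] pos_in_window[OF t False] by simp
  ultimately show ?thesis
    by (rule power_mono[rotated])
qed (simp add: zero_on_zeros t(1))

lemma integrable_neg_ln_power:
  assumes order: "\<And>t. t \<in> T \<Longrightarrow> 0 < B t \<and> 1 \<le> m t"
    and lower: "\<And>t x. t \<in> T \<Longrightarrow> 0 < \<bar>x - t\<bar> \<Longrightarrow> \<bar>x - t\<bar> \<le> \<delta> \<Longrightarrow> B t * \<bar>x - t\<bar> ^ m t \<le> g x"
  shows "(\<lambda>x. (- ln (g x)) ^ k) integrable_on {a..b}"
proof -
  define r where "r t = root (m t) (B t)" for t
  have r: "0 < r t" "(r t * \<bar>x - t\<bar>) ^ m t = B t * \<bar>x - t\<bar> ^ m t" if "t \<in> T" for t x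
    using order[OF that] by (auto simp: r_def power_mult_distrib real_root_pow_pos)
  define D where
    "D x = (\<Sum>t\<in>T. if \<bar>x - t\<bar> \<le> \<delta> then real (m t) ^ k * (- ln (r t * \<bar>x - t\<bar>)) ^ k else 0) + C ^ k"
    for x
  have "(\<lambda>x. if \<bar>x - t\<bar> \<le> \<delta> then real (m t) ^ k * (- ln (r t * \<bar>x - t\<bar>)) ^ k else 0) integrable_on {a..b}"
    if t: "t \<in> T" for t
  proof -
    have "(\<lambda>x. if \<bar>x - t\<bar> \<le> \<delta> then (- ln (r t * \<bar>x - t\<bar>)) ^ k else 0) integrable_on {a..b}"
      using has_integral_spike_window[OF r(1)[OF t] radius_pos] windows_inside[OF t] by blast
    then have "(\<lambda>x. real (m t) ^ k * (if \<bar>x - t\<bar> \<le> \<delta> then (- ln (r t * \<bar>x - t\<bar>)) ^ k else 0))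
                 integrable_on {a..b}"
      by (rule integrable_on_mult_right)
    then show ?thesis
      by (rule integrable_eq) simp
  qed
  then have D_integrable: "D integrable_on {a..b}"
    unfolding D_def by (intro integrable_add integrable_sum integrable_const_ivl finite_zeros)
  have bound: "\<bar>(- ln (g x)) ^ k\<bar> \<le> D x" if x: "x \<in> {a..b}" for x
  proof (cases rule: window_cases[of x])
    case (near t)
    have "\<bar>(- ln (g x)) ^ k\<bar> \<le> real (m t) ^ k * (- ln (r t * \<bar>x - t\<bar>)) ^ k"
      using near r[OF near(1)] lower[OF near(1) _ near(2)] by (intro abs_neg_ln_power_le_in_window) auto
    moreover have "0 \<le> C ^ k"
      using bound_nonneg by simp
    ultimately show ?thesis
      unfolding D_def sum_windows[OF subset_refl near] by linarith
  next
    case far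
    then have "D x = C ^ k"
      unfolding D_def sum_windows_off[OF far] by simp
    with neg_ln_power_off_windows[OF x far] show ?thesis
      by simp
  qed
  have "(\<lambda>x. (- ln (g x)) ^ k) \<in> borel_measurable (lebesgue_on {a..b})"
    using measurable by measurable
  then show ?thesis
    by (rule measurable_bounded_by_integrable_imp_integrable_real[OF _ D_integrable bound]) auto
qed

lemma integral_neg_ln_power_le:
  assumes pos: "\<And>t. t \<in> T \<Longrightarrow> 0 < c t"
    and lower: "\<And>t x. t \<in> T \<Longrightarrow> 0 < \<bar>x - t\<bar> \<Longrightarrow> \<bar>x - t\<bar> \<le> \<delta> \<Longrightarrow> c t * \<bar>x - t\<bar> \<le> g x"
  shows "integral {a..b} (\<lambda>x. (- ln (g x)) ^ k) \<le> (\<Sum>t\<in>T. spike_integral (c t) \<delta> k) + (b - a) * C ^ k"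
proof -
  define S where "S x = (\<Sum>t\<in>T. if \<bar>x - t\<bar> \<le> \<delta> then (- ln (c t * \<bar>x - t\<bar>)) ^ k else 0)" for x
  have majorant: "((\<lambda>x. S x + C ^ k) has_integral (\<Sum>t\<in>T. spike_integral (c t) \<delta> k) + (b - a) * C ^ k) {a..b}"
    unfolding S_def using has_integral_const_real[of "C ^ k" a b] interval
    by (intro has_integral_add has_integral_spikes[OF subset_refl pos]) (simp_all add: mult.commute)
  have integrable: "(\<lambda>x. (- ln (g x)) ^ k) integrable_on {a..b}"
    using pos lower by (intro integrable_neg_ln_power[of c "\<lambda>_. 1"]) auto
  have le: "(- ln (g x)) ^ k \<le> S x + C ^ k" if x: "x \<in> {a..b}" for x
  proof (cases rule: window_cases[of x])
    case (near t)
    have "\<bar>(- ln (g x)) ^ k\<bar> \<le> (- ln (c t * \<bar>x - t\<bar>)) ^ k"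
      using abs_neg_ln_power_le_in_window[OF near pos[OF near(1)], of 1] lower[OF near(1) _ near(2)] by simp
    moreover have "0 \<le> C ^ k"
      using bound_nonneg by simp
    ultimately show ?thesis
      unfolding S_def sum_windows[OF subset_refl near] by linarith
  next
    case far
    have "S x = 0"
      unfolding S_def using far by (rule sum_windows_off)
    with neg_ln_power_off_windows[OF x far, of k] show ?thesis
      unfolding abs_le_iff by linarith
  qed
  show ?thesis
    by (rule has_integral_le[OF integrable_integral[OF integrable] majorant le])
qed

lemma integral_neg_ln_power_ge:
  assumes sub: "T' \<subseteq> T" and pos: "\<And>t. t \<in> T' \<Longrightarrow> 0 < c t \<and> c t * \<delta> \<le> 1"
    and upper: "\<And>t x. t \<in> T' \<Longrightarrow> 0 < \<bar>x - t\<bar> \<Longrightarrow> \<bar>x - t\<bar> \<le> \<delta> \<Longrightarrow> g x \<le> c t * \<bar>x - t\<bar>"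
    and integrable: "(\<lambda>x. (- ln (g x)) ^ k) integrable_on {a..b}"
  shows "(\<Sum>t\<in>T'. spike_integral (c t) \<delta> k) - (b - a) * C ^ k \<le> integral {a..b} (\<lambda>x. (- ln (g x)) ^ k)"
proof -
  define S where "S x = (\<Sum>t\<in>T'. if \<bar>x - t\<bar> \<le> \<delta> then (- ln (c t * \<bar>x - t\<bar>)) ^ k else 0)" for x
  have minorant: "((\<lambda>x. S x - C ^ k) has_integral (\<Sum>t\<in>T'. spike_integral (c t) \<delta> k) - (b - a) * C ^ k) {a..b}"
    unfolding S_def using has_integral_const_real[of "C ^ k" a b] interval pos
    by (intro has_integral_diff has_integral_spikes[OF sub]) (simp_all add: mult.commute)
  have le: "S x - C ^ k \<le> (- ln (g x)) ^ k" if x: "x \<in> {a..b}" for x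
  proof (cases rule: window_cases[of x])
    case (near t)
    have "S x \<le> (- ln (g x)) ^ k"
    proof (cases "t \<in> T'")
      case True
      then show ?thesis
        unfolding S_def sum_windows[OF sub True near(2)]
        using pos[OF True] upper[OF True _ near(2)] by (intro spike_le_neg_ln_power_in_window[OF near]) auto
    next
      case False
      then have "\<forall>t'\<in>T'. \<delta> < \<bar>x - t'\<bar>"
        using off_other_windows[OF near(1) _ _ near(2)] sub by blast
      then have "S x = 0"
        unfolding S_def by (rule sum_windows_off)
      then show ?thesis
        using neg_ln_nonneg_in_window[OF near] by simp
    qed
    moreover have "0 \<le> C ^ k"
      using bound_nonneg by simp
    ultimately show ?thesis
      by linarith
  next
    case far
    then have "\<forall>t'\<in>T'. \<delta> < \<bar>x - t'\<bar>"
      using sub by blast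
    then have "S x = 0"
      unfolding S_def by (rule sum_windows_off)
    with neg_ln_power_off_windows[OF x far, of k] show ?thesis
      unfolding abs_le_iff by linarith
  qed
  show ?thesis
    by (rule has_integral_le[OF minorant integrable_integral[OF integrable] le])
qed

end

section \<open>Functions with finitely many zeros of finite order\<close>

lemma tendsto_squeeze_family:
  fixes X :: "nat \<Rightarrow> real"
  assumes "F \<noteq> bot" and l: "(l \<longlongrightarrow> L) F" and u: "(u \<longlongrightarrow> L) F"
    and bounds: "\<forall>\<^sub>F e in F. \<exists>lo up. lo \<longlonglongrightarrow> l e \<and> up \<longlonglongrightarrow> u e \<and>
                   (\<forall>k. lo k \<le> X k \<and> X k \<le> up k)"
  shows "X \<longlonglongrightarrow> L"
proof (rule order_tendstoI)
  fix y assume "y < L"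
  then have "\<forall>\<^sub>F e in F. y < l e \<and>
      (\<exists>lo up. lo \<longlonglongrightarrow> l e \<and> up \<longlonglongrightarrow> u e \<and> (\<forall>k. lo k \<le> X k \<and> X k \<le> up k))"
    using order_tendstoD(1)[OF l] bounds by (intro eventually_conj)
  then obtain e lo where "y < l e" "lo \<longlonglongrightarrow> l e" and lo: "\<forall>k. lo k \<le> X k"
    using eventually_happens'[OF \<open>F \<noteq> bot\<close>] by blast
  then have "\<forall>\<^sub>F k in sequentially. y < lo k"
    by (simp add: order_tendstoD(1))
  then show "\<forall>\<^sub>F k in sequentially. y < X k"
    by eventually_elim (use lo in \<open>meson less_le_trans\<close>)
next
  fix y assume "L < y"
  then have "\<forall>\<^sub>F e in F. u e < y \<and>
      (\<exists>lo up. lo \<longlonglongrightarrow> l e \<and> up \<longlonglongrightarrow> u e \<and> (\<forall>k. lo k \<le> X k \<and> X k \<le> up k))"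
    using order_tendstoD(2)[OF u] bounds by (intro eventually_conj)
  then obtain e up where "u e < y" "up \<longlonglongrightarrow> u e" and up: "\<forall>k. X k \<le> up k"
    using eventually_happens'[OF \<open>F \<noteq> bot\<close>] by blast
  then have "\<forall>\<^sub>F k in sequentially. up k < y"
    by (simp add: order_tendstoD(2))
  then show "\<forall>\<^sub>F k in sequentially. X k < y"
    by eventually_elim (use up in \<open>meson le_less_trans\<close>)
qed

lemma bounded_ln_off_zeros:
  fixes g :: "real \<Rightarrow> real"
  assumes "continuous_on {a..b} g" "\<And>x. x \<in> {a..b} \<Longrightarrow> x \<notin> T \<Longrightarrow> 0 < g x" "0 < \<delta>"
  obtains C where "0 \<le> C" "\<And>x. x \<in> {a..b} \<Longrightarrow> \<forall>t\<in>T. \<delta> < \<bar>x - t\<bar> \<Longrightarrow> \<bar>ln (g x)\<bar> \<le> C"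
proof -
  define K where "K = {a..b} \<inter> (\<Inter>t\<in>T. {x. \<delta> \<le> \<bar>x - t\<bar>})"
  have "closed (\<Inter>t\<in>T. {x. \<delta> \<le> \<bar>x - t\<bar>})"
    by (intro closed_INT ballI closed_Collect_le continuous_intros)
  then have "compact K"
    unfolding K_def by (intro compact_Int_closed) auto
  moreover have "continuous_on K (\<lambda>x. ln (g x))"
    using assms unfolding K_def
    by (intro continuous_on_ln continuous_on_subset[OF assms(1)]) force+
  ultimately obtain C where C: "\<forall>x\<in>K. \<bar>ln (g x)\<bar> \<le> C"
    using compact_continuous_image compact_imp_bounded bounded_real by (metis imageI)
  show ?thesis
  proof
    show "\<bar>ln (g x)\<bar> \<le> max C 0" if "x \<in> {a..b}" "\<forall>t\<in>T. \<delta> < \<bar>x - t\<bar>" for x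
      using C that unfolding K_def by force
  qed simp
qed

locale finite_order_zeros =
  fixes g :: "real \<Rightarrow> real" and a b :: real and T :: "real set" and A :: "real \<Rightarrow> real"
  assumes continuous: "continuous_on {a..b} g"
    and nonneg: "\<And>x. 0 \<le> g x"
    and interval: "a \<le> b"
    and finite_zeros: "finite T"
    and zeros_interior: "\<And>t. t \<in> T \<Longrightarrow> a < t \<and> t < b"
    and zero_iff: "\<And>x. x \<in> {a..b} \<Longrightarrow> g x = 0 \<longleftrightarrow> x \<in> T"
    and finite_order: "\<And>t. t \<in> T \<Longrightarrow> \<exists>B m. 0 < B \<and> 1 \<le> m \<and> (\<forall>\<^sub>F x in at t. B * \<bar>x - t\<bar> ^ m \<le> g x)"
    and slope: "\<And>t. t \<in> T \<Longrightarrow> ((\<lambda>x. g x / \<bar>x - t\<bar>) \<longlongrightarrow> A t) (at t)"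
begin

lemma eventually_le_1: "t \<in> T \<Longrightarrow> \<forall>\<^sub>F x in at t. g x \<le> 1"
proof -
  assume t: "t \<in> T"
  then have "isCont g t"
    using continuous zeros_interior[OF t] by (simp add: continuous_on_interior)
  moreover have "g t = 0"
    using zero_iff[of t] zeros_interior[OF t] t by simp
  ultimately have "\<forall>\<^sub>F x in at t. g x < 1"
    by (intro order_tendstoD(2)) (auto simp: isCont_def)
  then show ?thesis
    by eventually_elim simp
qed

lemma eventually_slope_bounds:
  assumes "t \<in> T" "0 < \<epsilon>"
  shows "\<forall>\<^sub>F x in at t. (A t - \<epsilon>) * \<bar>x - t\<bar> \<le> g x \<and> g x \<le> (A t + \<epsilon>) * \<bar>x - t\<bar>"
proof -
  have "\<forall>\<^sub>F x in at t. \<bar>g x / \<bar>x - t\<bar> - A t\<bar> < \<epsilon>"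
    using slope[OF assms(1)] assms(2) by (auto simp: tendsto_iff dist_real_def)
  moreover have "\<forall>\<^sub>F x in at t. x \<noteq> t"
    by (simp add: eventually_at_filter)
  ultimately show ?thesis
  proof eventually_elim
    case (elim x)
    then have "A t - \<epsilon> < g x / \<bar>x - t\<bar>" "g x / \<bar>x - t\<bar> < A t + \<epsilon>" "0 < \<bar>x - t\<bar>"
      by (auto simp: abs_less_iff)
    then show ?case
      by (simp add: pos_less_divide_eq pos_divide_less_eq less_imp_le)
  qed
qed

lemma eventually_zero_windows:
  assumes "\<And>t. t \<in> T \<Longrightarrow> \<forall>\<^sub>F x in at t. P t x"
  shows "\<forall>\<^sub>F \<delta> in at_right 0. 0 < \<delta> \<and> (\<forall>t\<in>T. a \<le> t - \<delta> \<and> t + \<delta> \<le> b) \<and>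
           (\<forall>t\<in>T. \<forall>t'\<in>T. t \<noteq> t' \<longrightarrow> 2 * \<delta> < \<bar>t - t'\<bar>) \<and>
           (\<forall>t\<in>T. \<forall>x. 0 < \<bar>x - t\<bar> \<and> \<bar>x - t\<bar> \<le> \<delta> \<longrightarrow> P t x)"
proof -
  have small: "\<forall>\<^sub>F \<delta> in at_right 0. \<delta> < d" if "0 < d" for d :: real
    using order_tendstoD(2)[OF tendsto_ident_at that] by simp
  have inside: "\<forall>\<^sub>F \<delta> in at_right 0. \<forall>t\<in>T. a \<le> t - \<delta> \<and> t + \<delta> \<le> b"
  proof (intro eventually_ball_finite finite_zeros ballI)
    fix t assume "t \<in> T"
    then have "\<forall>\<^sub>F \<delta> in at_right 0. \<delta> < min (t - a) (b - t)"
      using zeros_interior by (intro small) simp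
    then show "\<forall>\<^sub>F \<delta> in at_right 0. a \<le> t - \<delta> \<and> t + \<delta> \<le> b"
      by eventually_elim auto
  qed
  have separated: "\<forall>\<^sub>F \<delta> in at_right 0. \<forall>t\<in>T. \<forall>t'\<in>T. t \<noteq> t' \<longrightarrow> 2 * \<delta> < \<bar>t - t'\<bar>"
  proof (intro eventually_ball_finite finite_zeros ballI)
    fix t t' :: real
    show "\<forall>\<^sub>F \<delta> in at_right 0. t \<noteq> t' \<longrightarrow> 2 * \<delta> < \<bar>t - t'\<bar>"
    proof (cases "t = t'")
      case False
      then have "\<forall>\<^sub>F \<delta> in at_right 0. \<delta> < \<bar>t - t'\<bar> / 2"
        by (intro small) simp
      then show ?thesis
        by eventually_elim auto
    qed simp
  qed
  have punctured: "\<forall>\<^sub>F \<delta> in at_right 0. \<forall>t\<in>T. \<forall>x. 0 < \<bar>x - t\<bar> \<and> \<bar>x - t\<bar> \<le> \<delta> \<longrightarrow> P t x"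
  proof (intro eventually_ball_finite finite_zeros ballI)
    fix t assume "t \<in> T"
    then obtain d where "0 < d" and d: "\<And>x. x \<noteq> t \<Longrightarrow> dist x t < d \<Longrightarrow> P t x"
      using assms unfolding eventually_at by blast
    from small[OF \<open>0 < d\<close>] show "\<forall>\<^sub>F \<delta> in at_right 0. \<forall>x. 0 < \<bar>x - t\<bar> \<and> \<bar>x - t\<bar> \<le> \<delta> \<longrightarrow> P t x"
      by eventually_elim (auto intro!: d simp: dist_real_def)
  qed
  show ?thesis
    using eventually_at_right_less[of 0] inside separated punctured by eventually_elim blast
qed

lemma exists_zero_windows:
  assumes "\<And>t. t \<in> T \<Longrightarrow> \<forall>\<^sub>F x in at t. P t x" and "\<And>t. t \<in> T \<Longrightarrow> 0 < e t"
  shows "\<exists>\<delta> C. zero_windows g a b \<delta> C T \<and> (\<forall>t\<in>T. \<delta> \<le> e t) \<and>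
           (\<forall>t\<in>T. \<forall>x. 0 < \<bar>x - t\<bar> \<and> \<bar>x - t\<bar> \<le> \<delta> \<longrightarrow> P t x)"
proof -
  have "\<forall>\<^sub>F \<delta> in at_right 0. \<forall>t\<in>T. \<delta> < e t"
    using assms(2) order_tendstoD(2)[OF tendsto_ident_at]
    by (intro eventually_ball_finite finite_zeros) auto
  moreover have "\<forall>\<^sub>F \<delta> in at_right 0. 0 < \<delta> \<and> (\<forall>t\<in>T. a \<le> t - \<delta> \<and> t + \<delta> \<le> b) \<and>
           (\<forall>t\<in>T. \<forall>t'\<in>T. t \<noteq> t' \<longrightarrow> 2 * \<delta> < \<bar>t - t'\<bar>) \<and>
           (\<forall>t\<in>T. \<forall>x. 0 < \<bar>x - t\<bar> \<and> \<bar>x - t\<bar> \<le> \<delta> \<longrightarrow> P t x \<and> g x \<le> 1)"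
    using assms(1) eventually_le_1 by (intro eventually_zero_windows eventually_conj)
  ultimately have "\<forall>\<^sub>F \<delta> in at_right 0. (\<forall>t\<in>T. \<delta> < e t) \<and> 0 < \<delta> \<and>
           (\<forall>t\<in>T. a \<le> t - \<delta> \<and> t + \<delta> \<le> b) \<and>
           (\<forall>t\<in>T. \<forall>t'\<in>T. t \<noteq> t' \<longrightarrow> 2 * \<delta> < \<bar>t - t'\<bar>) \<and>
           (\<forall>t\<in>T. \<forall>x. 0 < \<bar>x - t\<bar> \<and> \<bar>x - t\<bar> \<le> \<delta> \<longrightarrow> P t x \<and> g x \<le> 1)"
    by (rule eventually_conj)
  then obtain \<delta> where \<delta>: "0 < \<delta>" "\<forall>t\<in>T. a \<le> t - \<delta> \<and> t + \<delta> \<le> b"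
    "\<forall>t\<in>T. \<forall>t'\<in>T. t \<noteq> t' \<longrightarrow> 2 * \<delta> < \<bar>t - t'\<bar>"
    "\<forall>t\<in>T. \<forall>x. 0 < \<bar>x - t\<bar> \<and> \<bar>x - t\<bar> \<le> \<delta> \<longrightarrow> P t x \<and> g x \<le> 1" "\<forall>t\<in>T. \<delta> < e t"
    using eventually_happens'[OF trivial_limit_at_right_real] by blast
  have pos: "0 < g x" if "x \<in> {a..b}" "x \<notin> T" for x
    using zero_iff[OF that(1)] nonneg[of x] that(2) by simp
  obtain C where C: "0 \<le> C" "\<And>x. x \<in> {a..b} \<Longrightarrow> \<forall>t\<in>T. \<delta> < \<bar>x - t\<bar> \<Longrightarrow> \<bar>ln (g x)\<bar> \<le> C"
    using bounded_ln_off_zeros[OF continuous pos \<delta>(1)] by blast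
  have "zero_windows g a b \<delta> C T"
  proof
    show "g x \<le> 1" if "t \<in> T" "\<bar>x - t\<bar> \<le> \<delta>" for t x
      using \<delta>(4) zero_iff[of t] zeros_interior[of t] that by (cases "x = t") auto
  qed (use nonneg continuous_imp_measurable_on_sets_lebesgue[OF continuous] finite_zeros zero_iff
        interval \<delta> C in auto)
  with \<delta>(4,5) show ?thesis
    by (meson less_imp_le)
qed

lemma integrable_neg_ln_power: "(\<lambda>x. (- ln (g x)) ^ k) integrable_on {a..b}"
proof -
  obtain B m where order: "\<And>t. t \<in> T \<Longrightarrow> 0 < B t \<and> 1 \<le> m t \<and> (\<forall>\<^sub>F x in at t. B t * \<bar>x - t\<bar> ^ m t \<le> g x)"
    using finite_order by metis
  obtain \<delta> C where "zero_windows g a b \<delta> C T"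
    and lower: "\<And>t x. t \<in> T \<Longrightarrow> 0 < \<bar>x - t\<bar> \<Longrightarrow> \<bar>x - t\<bar> \<le> \<delta> \<Longrightarrow> B t * \<bar>x - t\<bar> ^ m t \<le> g x"
    using exists_zero_windows[of "\<lambda>t x. B t * \<bar>x - t\<bar> ^ m t \<le> g x" "\<lambda>_. 1"] order by auto
  then show ?thesis
    using order by (intro zero_windows.integrable_neg_ln_power[of g a b \<delta> C T B m]) auto
qed

lemma integral_neg_ln_power_over_fact_bounds:
  assumes "0 < \<epsilon>" and slopes: "\<And>t. t \<in> T \<Longrightarrow> \<epsilon> < A t"
  shows "\<exists>lo up. lo \<longlonglongrightarrow> (\<Sum>t\<in>T. 2 / (A t + \<epsilon>)) \<and> up \<longlonglongrightarrow> (\<Sum>t\<in>T. 2 / (A t - \<epsilon>)) \<and>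
           (\<forall>k. lo k \<le> integral {a..b} (\<lambda>x. (- ln (g x)) ^ k) / fact k \<and>
                integral {a..b} (\<lambda>x. (- ln (g x)) ^ k) / fact k \<le> up k)"
proof -
  have pos: "0 < A t - \<epsilon>" "0 < A t + \<epsilon>" if "t \<in> T" for t
    using slopes[OF that] \<open>0 < \<epsilon>\<close> by auto
  have "\<exists>\<delta> C. zero_windows g a b \<delta> C T \<and> (\<forall>t\<in>T. \<delta> \<le> 1 / (A t + \<epsilon>)) \<and>
          (\<forall>t\<in>T. \<forall>x. 0 < \<bar>x - t\<bar> \<and> \<bar>x - t\<bar> \<le> \<delta> \<longrightarrow>
             (A t - \<epsilon>) * \<bar>x - t\<bar> \<le> g x \<and> g x \<le> (A t + \<epsilon>) * \<bar>x - t\<bar>)"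
    using \<open>0 < \<epsilon>\<close> pos by (intro exists_zero_windows eventually_slope_bounds) auto
  then obtain \<delta> C where windows: "zero_windows g a b \<delta> C T" and \<delta>: "\<forall>t\<in>T. \<delta> \<le> 1 / (A t + \<epsilon>)"
    and bounds: "\<forall>t\<in>T. \<forall>x. 0 < \<bar>x - t\<bar> \<and> \<bar>x - t\<bar> \<le> \<delta> \<longrightarrow>
                   (A t - \<epsilon>) * \<bar>x - t\<bar> \<le> g x \<and> g x \<le> (A t + \<epsilon>) * \<bar>x - t\<bar>"
    by blast
  interpret W: zero_windows g a b \<delta> C T
    by (fact windows)
  have \<delta>_small: "(A t + \<epsilon>) * \<delta> \<le> 1" if "t \<in> T" for t
    using bspec[OF \<delta> that] pos(2)[OF that] by (simp add: pos_le_divide_eq mult.commute)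
  define I where "I k = integral {a..b} (\<lambda>x. (- ln (g x)) ^ k)" for k
  define lo where "lo k = (\<Sum>t\<in>T. spike_integral (A t + \<epsilon>) \<delta> k) / fact k - (b - a) * (C ^ k / fact k)" for k
  define up where "up k = (\<Sum>t\<in>T. spike_integral (A t - \<epsilon>) \<delta> k) / fact k + (b - a) * (C ^ k / fact k)" for k
  have "lo \<longlonglongrightarrow> (\<Sum>t\<in>T. 2 / (A t + \<epsilon>)) - (b - a) * 0"
    unfolding lo_def using pos W.radius_pos
    by (intro tendsto_intros sum_spike_integral_over_fact_tendsto power_over_fact_tendsto_0 finite_zeros) auto
  moreover have "up \<longlonglongrightarrow> (\<Sum>t\<in>T. 2 / (A t - \<epsilon>)) + (b - a) * 0"
    unfolding up_def using pos W.radius_pos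
    by (intro tendsto_intros sum_spike_integral_over_fact_tendsto power_over_fact_tendsto_0 finite_zeros) auto
  moreover have "lo k \<le> I k / fact k \<and> I k / fact k \<le> up k" for k
  proof -
    have "(\<Sum>t\<in>T. spike_integral (A t + \<epsilon>) \<delta> k) - (b - a) * C ^ k \<le> I k"
      unfolding I_def using pos \<delta>_small bounds
      by (intro W.integral_neg_ln_power_ge integrable_neg_ln_power) auto
    moreover have "I k \<le> (\<Sum>t\<in>T. spike_integral (A t - \<epsilon>) \<delta> k) + (b - a) * C ^ k"
      unfolding I_def using pos bounds by (intro W.integral_neg_ln_power_le) auto
    ultimately show ?thesis
      unfolding lo_def up_def
      by (simp add: divide_right_mono diff_divide_distrib[symmetric] add_divide_distrib[symmetric])
  qed
  ultimately show ?thesis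
    unfolding I_def by auto
qed

lemma integral_neg_ln_power_over_fact_tendsto:
  assumes pos: "\<And>t. t \<in> T \<Longrightarrow> 0 < A t"
  shows "(\<lambda>k. integral {a..b} (\<lambda>x. (- ln (g x)) ^ k) / fact k) \<longlonglongrightarrow> (\<Sum>t\<in>T. 2 / A t)"
proof (rule tendsto_squeeze_family[OF trivial_limit_at_right_real])
  show "((\<lambda>\<epsilon>. \<Sum>t\<in>T. 2 / (A t + \<epsilon>)) \<longlongrightarrow> (\<Sum>t\<in>T. 2 / A t)) (at_right 0)"
    "((\<lambda>\<epsilon>. \<Sum>t\<in>T. 2 / (A t - \<epsilon>)) \<longlongrightarrow> (\<Sum>t\<in>T. 2 / A t)) (at_right 0)"
    by (auto intro!: tendsto_eq_intros dest: pos)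
  have "\<forall>\<^sub>F \<epsilon> in at_right 0. \<forall>t\<in>T. \<epsilon> < A t"
    using pos order_tendstoD(2)[OF tendsto_ident_at] by (intro eventually_ball_finite finite_zeros) auto
  with eventually_at_right_less[of 0]
  show "\<forall>\<^sub>F \<epsilon> in at_right 0. \<exists>lo up. lo \<longlonglongrightarrow> (\<Sum>t\<in>T. 2 / (A t + \<epsilon>)) \<and> up \<longlonglongrightarrow> (\<Sum>t\<in>T. 2 / (A t - \<epsilon>)) \<and>
          (\<forall>k. lo k \<le> integral {a..b} (\<lambda>x. (- ln (g x)) ^ k) / fact k \<and>
               integral {a..b} (\<lambda>x. (- ln (g x)) ^ k) / fact k \<le> up k)"
    by eventually_elim (rule integral_neg_ln_power_over_fact_bounds, auto)
qed

lemma integral_neg_ln_power_over_fact_at_top: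
  assumes t0: "t0 \<in> T" "A t0 = 0"
  shows "filterlim (\<lambda>k. integral {a..b} (\<lambda>x. (- ln (g x)) ^ k) / fact k) at_top sequentially"
  unfolding filterlim_at_top
proof
  fix Z :: real
  define \<eta> where "\<eta> = 1 / (\<bar>Z\<bar> + 1)"
  have \<eta>: "0 < \<eta>" "Z < 2 / \<eta>"
    by (auto simp: \<eta>_def)
  have "\<forall>\<^sub>F x in at t. t = t0 \<longrightarrow> g x \<le> \<eta> * \<bar>x - t\<bar>" if "t \<in> T" for t
    using eventually_slope_bounds[OF t0(1) \<eta>(1)] t0(2) by (cases "t = t0") (auto elim: eventually_mono)
  then obtain \<delta> C where windows: "zero_windows g a b \<delta> C T" and \<delta>: "\<delta> \<le> 1 / \<eta>"
    and upper: "\<And>x. 0 < \<bar>x - t0\<bar> \<Longrightarrow> \<bar>x - t0\<bar> \<le> \<delta> \<Longrightarrow> g x \<le> \<eta> * \<bar>x - t0\<bar>"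
    using exists_zero_windows[of "\<lambda>t x. t = t0 \<longrightarrow> g x \<le> \<eta> * \<bar>x - t\<bar>" "\<lambda>_. 1 / \<eta>"] \<eta>(1) t0(1)
    by auto
  interpret W: zero_windows g a b \<delta> C T by (fact windows)
  have lower: "spike_integral \<eta> \<delta> k - (b - a) * C ^ k \<le> integral {a..b} (\<lambda>x. (- ln (g x)) ^ k)" for k
    using W.integral_neg_ln_power_ge[of "{t0}" "\<lambda>_. \<eta>" k] t0 \<eta>(1) \<delta> upper integrable_neg_ln_power
    by (simp add: field_simps)
  have "(\<lambda>k. spike_integral \<eta> \<delta> k / fact k - (b - a) * (C ^ k / fact k)) \<longlonglongrightarrow> 2 / \<eta> - (b - a) * 0"
    using \<eta>(1) W.radius_pos by (intro tendsto_intros spike_integral_over_fact_tendsto power_over_fact_tendsto_0)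
  then have "\<forall>\<^sub>F k in sequentially. Z < spike_integral \<eta> \<delta> k / fact k - (b - a) * (C ^ k / fact k)"
    using \<eta>(2) by (simp add: order_tendstoD(1))
  then show "\<forall>\<^sub>F k in sequentially. Z \<le> integral {a..b} (\<lambda>x. (- ln (g x)) ^ k) / fact k"
  proof eventually_elim
    case (elim k)
    with lower[of k] show ?case
      by (simp add: field_simps)
  qed
qed

end

section \<open>The modulus of a polynomial on the unit circle\<close>

lemma integral_one_periodic_shift:
  fixes f :: "real \<Rightarrow> real"
  assumes periodic: "\<And>x. f (x + 1) = f x" and "f integrable_on {s..s + 1}" "0 \<le> s" "s \<le> 1"
  shows "integral {0..1} f = integral {s..s + 1} f"
proof -
  obtain I where I: "(f has_integral I) {s..1}"
    using integrable_subinterval_real[OF assms(2), of s 1] assms(3) by auto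
  obtain J where J: "(f has_integral J) {1..s + 1}"
    using integrable_subinterval_real[OF assms(2), of 1 "s + 1"] assms(4) by auto
  have "((\<lambda>x. f (x + 1)) has_integral J) {1 - 1..s + 1 - 1}"
    by (rule has_integral_shift_real_ivl[OF J])
  then have J': "(f has_integral J) {0..s}"
    by (simp add: periodic)
  have "(f has_integral J + I) {0..1}"
    by (rule has_integral_combine[OF _ _ J' I]) (use assms in auto)
  moreover have "(f has_integral I + J) {s..s + 1}"
    by (rule has_integral_combine[OF _ _ I J]) (use assms in auto)
  ultimately show ?thesis
    by (simp add: integral_unique add.commute)
qed

lemma norm_over_dist_tendsto_norm_derivative:
  fixes \<phi> :: "real \<Rightarrow> 'a::real_normed_vector"
  assumes "(\<phi> has_vector_derivative D) (at t)" "\<phi> t = 0"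
  shows "((\<lambda>x. norm (\<phi> x) / \<bar>x - t\<bar>) \<longlongrightarrow> norm D) (at t)"
proof -
  have "((\<lambda>x. norm (\<phi> x - (x - t) *\<^sub>R D) / \<bar>x - t\<bar>) \<longlongrightarrow> 0) (at t)"
    using assms unfolding has_vector_derivative_def has_derivative_iff_norm by simp
  moreover have "\<bar>norm (\<phi> x) / \<bar>x - t\<bar> - norm D\<bar> \<le> norm (\<phi> x - (x - t) *\<^sub>R D) / \<bar>x - t\<bar>" if "x \<noteq> t" for x
  proof -
    have "norm ((x - t) *\<^sub>R D) = \<bar>x - t\<bar> * norm D"
      by simp
    then have "norm (\<phi> x) / \<bar>x - t\<bar> - norm D = (norm (\<phi> x) - norm ((x - t) *\<^sub>R D)) / \<bar>x - t\<bar>"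
      using that by (simp add: field_simps)
    also have "\<bar>\<dots>\<bar> = \<bar>norm (\<phi> x) - norm ((x - t) *\<^sub>R D)\<bar> / \<bar>x - t\<bar>"
      by simp
    also have "\<dots> \<le> norm (\<phi> x - (x - t) *\<^sub>R D) / \<bar>x - t\<bar>"
      by (rule divide_right_mono[OF norm_triangle_ineq3]) simp
    finally show ?thesis .
  qed
  then have "\<forall>\<^sub>F x in at t. norm (norm (\<phi> x) / \<bar>x - t\<bar> - norm D) \<le> norm (\<phi> x - (x - t) *\<^sub>R D) / \<bar>x - t\<bar>"
    by (simp add: eventually_at_filter)
  ultimately have "((\<lambda>x. norm (\<phi> x) / \<bar>x - t\<bar> - norm D) \<longlongrightarrow> 0) (at t)"
    by (rule Lim_null_comparison[rotated])
  then show ?thesis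
    by (simp add: LIM_zero_iff)
qed

lemma cis_2pi_add_of_int: "cis (2 * pi * (x + of_int n)) = cis (2 * pi * x)"
  by (simp add: distrib_left cis_mult[symmetric])

lemma cis_2pi_inj:
  assumes "cis (2 * pi * x) = cis (2 * pi * y)" "\<bar>x - y\<bar> < 1"
  shows "x = y"
proof -
  have "cis (2 * pi * (x - y)) = 1"
    using assms(1) cis_divide[of "2 * pi * x" "2 * pi * y"] by (simp add: right_diff_distrib)
  then obtain n :: int where n: "x - y = n"
    using cos_one_2pi_int[of "2 * pi * (x - y)"] by (auto simp: complex_eq_iff)
  with assms(2) have "\<bar>real_of_int n\<bar> < 1"
    by simp
  then have "n = 0"
    by linarith
  with n show ?thesis
    by simp
qed

lemma inj_on_cis_2pi: "inj_on (\<lambda>t. cis (2 * pi * t)) {s<..<s + 1}"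
  by (rule inj_onI) (rule cis_2pi_inj, auto)

lemma unit_circle_eq_cis_2pi:
  assumes "cmod z = 1"
  obtains t where "s \<le> t" "t < s + 1" "z = cis (2 * pi * t)"
proof
  define u where "u = Arg z / (2 * pi)"
  have "z \<noteq> 0"
    using assms by auto
  then have "cis (2 * pi * u) = z"
    using cis_Arg[of z] assms by (simp add: u_def sgn_div_norm)
  then show "z = cis (2 * pi * (u + of_int (- \<lfloor>u - s\<rfloor>)))"
    by (simp only: cis_2pi_add_of_int)
qed linarith+

lemma poly_cis_2pi_nonzero:
  assumes "Q \<noteq> 0"
  obtains s where "0 \<le> s" "s \<le> 1" "poly Q (cis (2 * pi * s)) \<noteq> 0"
proof (rule ccontr)
  assume "\<not> thesis"
  with that have "(\<lambda>s. cis (2 * pi * s)) ` {0<..<1} \<subseteq> {z. poly Q z = 0}"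
    by force
  moreover have "inj_on (\<lambda>s. cis (2 * pi * s)) {0<..<1}"
    using inj_on_cis_2pi[of 0] by simp
  ultimately have "finite {0<..<1::real}"
    using poly_roots_finite[OF assms] finite_subset inj_on_finite by blast
  then show False
    using infinite_Ioo[of 0 "1::real"] by simp
qed

lemma has_vector_derivative_comp_cis_2pi:
  assumes "(F has_field_derivative F') (at (cis (2 * pi * t)))"
  shows "((\<lambda>x. F (cis (2 * pi * x))) has_vector_derivative F' * (2 * pi * \<i> * cis (2 * pi * t))) (at t)"
proof -
  have cis_exp: "cis (2 * pi * x) = exp (2 * pi * \<i> * complex_of_real x)" for x
    by (simp add: cis_conv_exp mult_ac)
  have "((\<lambda>w. F (exp (2 * pi * \<i> * w))) has_field_derivative
          F' * (exp (2 * pi * \<i> * complex_of_real t) * (2 * pi * \<i>))) (at (complex_of_real t))"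
    using assms unfolding cis_exp by (auto intro!: DERIV_chain2[of F] derivative_eq_intros)
  from has_vector_derivative_real_field[OF this] show ?thesis
    unfolding cis_exp by (simp add: mult_ac)
qed

lemma norm_comp_cis_2pi_over_dist_tendsto:
  assumes "(F has_field_derivative F') (at (cis (2 * pi * t)))" "F (cis (2 * pi * t)) = 0"
  shows "((\<lambda>x. cmod (F (cis (2 * pi * x))) / \<bar>x - t\<bar>) \<longlongrightarrow> 2 * pi * cmod F') (at t)"
  using norm_over_dist_tendsto_norm_derivative[OF has_vector_derivative_comp_cis_2pi[OF assms(1)]] assms(2)
  by (simp add: norm_mult mult.commute)

definition circle_modulus :: "complex poly \<Rightarrow> real \<Rightarrow> real" where
  "circle_modulus Q x = cmod (poly Q (cis (2 * pi * x)))"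

lemma circle_modulus_slope:
  assumes "poly Q (cis (2 * pi * t)) = 0"
  shows "((\<lambda>x. circle_modulus Q x / \<bar>x - t\<bar>) \<longlongrightarrow> 2 * pi * cmod (poly (pderiv Q) (cis (2 * pi * t)))) (at t)"
  unfolding circle_modulus_def by (rule norm_comp_cis_2pi_over_dist_tendsto[OF poly_DERIV assms])

lemma circle_modulus_finite_order:
  assumes "Q \<noteq> 0" "poly Q (cis (2 * pi * t)) = 0"
  shows "\<exists>B m. 0 < B \<and> 1 \<le> m \<and> (\<forall>\<^sub>F x in at t. B * \<bar>x - t\<bar> ^ m \<le> circle_modulus Q x)"
proof -
  define z where "z = cis (2 * pi * t)"
  define m where "m = order z Q"
  obtain q where q: "Q = [:- z, 1:] ^ m * q" "\<not> [:- z, 1:] dvd q"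
    using order_decomp[OF assms(1)] unfolding m_def by blast
  have "1 \<le> m"
    using order_root[of Q z] assms unfolding m_def z_def by simp
  have c: "0 < cmod (poly q z)"
    using q(2) poly_eq_0_iff_dvd by auto
  have factor: "circle_modulus Q x = cmod (cis (2 * pi * x) - z) ^ m * cmod (poly q (cis (2 * pi * x)))" for x
    unfolding circle_modulus_def by (subst q(1)) (simp add: norm_mult norm_power)
  have "((\<lambda>x. cmod (cis (2 * pi * x) - z) / \<bar>x - t\<bar>) \<longlongrightarrow> 2 * pi * cmod (1 :: complex)) (at t)"
    by (rule norm_comp_cis_2pi_over_dist_tendsto) (auto intro!: derivative_eq_intros simp: z_def)
  then have "\<forall>\<^sub>F x in at t. pi < cmod (cis (2 * pi * x) - z) / \<bar>x - t\<bar>"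
    by (rule order_tendstoD(1)) simp
  moreover have "((\<lambda>x. cmod (poly q (cis (2 * pi * x)))) \<longlongrightarrow> cmod (poly q z)) (at t)"
    unfolding z_def by (intro tendsto_intros)
  then have "\<forall>\<^sub>F x in at t. cmod (poly q z) / 2 < cmod (poly q (cis (2 * pi * x)))"
    by (rule order_tendstoD(1)) (use c in simp)
  moreover have "\<forall>\<^sub>F x in at t. x \<noteq> t"
    by (simp add: eventually_at_filter)
  ultimately have "\<forall>\<^sub>F x in at t. pi ^ m * (cmod (poly q z) / 2) * \<bar>x - t\<bar> ^ m \<le> circle_modulus Q x"
  proof eventually_elim
    case (elim x)
    then have "pi * \<bar>x - t\<bar> \<le> cmod (cis (2 * pi * x) - z)"
      by (simp add: pos_less_divide_eq less_imp_le)
    then have "(pi * \<bar>x - t\<bar>) ^ m * (cmod (poly q z) / 2)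
               \<le> cmod (cis (2 * pi * x) - z) ^ m * cmod (poly q (cis (2 * pi * x)))"
      using elim(2) c by (intro mult_mono power_mono) auto
    then show ?case
      unfolding factor by (simp add: power_mult_distrib mult_ac)
  qed
  with \<open>1 \<le> m\<close> c show ?thesis
    by (intro exI[of _ "pi ^ m * (cmod (poly q z) / 2)"] exI[of _ m]) auto
qed

lemma finite_order_zeros_circle_modulus:
  assumes "Q \<noteq> 0" and s: "poly Q (cis (2 * pi * s)) \<noteq> 0"
  shows "finite_order_zeros (circle_modulus Q) s (s + 1) {t. s < t \<and> t < s + 1 \<and> poly Q (cis (2 * pi * t)) = 0}
           (\<lambda>t. 2 * pi * cmod (poly (pderiv Q) (cis (2 * pi * t))))"
proof
  let ?T = "{t. s < t \<and> t < s + 1 \<and> poly Q (cis (2 * pi * t)) = 0}"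
  have "inj_on (\<lambda>t. cis (2 * pi * t)) ?T"
    by (rule inj_on_subset[OF inj_on_cis_2pi]) auto
  moreover have "(\<lambda>t. cis (2 * pi * t)) ` ?T \<subseteq> {z. poly Q z = 0}"
    by auto
  ultimately show "finite ?T"
    using poly_roots_finite[OF assms(1)] finite_subset inj_on_finite by blast
  show "circle_modulus Q x = 0 \<longleftrightarrow> x \<in> ?T" if "x \<in> {s..s + 1}" for x
  proof (cases "x = s \<or> x = s + 1")
    case True
    then show ?thesis
      using s cis_2pi_add_of_int[of s 1] by (auto simp: circle_modulus_def)
  qed (use that in \<open>auto simp: circle_modulus_def\<close>)
  show "\<exists>B m. 0 < B \<and> 1 \<le> m \<and> (\<forall>\<^sub>F x in at t. B * \<bar>x - t\<bar> ^ m \<le> circle_modulus Q x)" if "t \<in> ?T" for t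
    using circle_modulus_finite_order[OF assms(1)] that by simp
  show "((\<lambda>x. circle_modulus Q x / \<bar>x - t\<bar>) \<longlongrightarrow> 2 * pi * cmod (poly (pderiv Q) (cis (2 * pi * t)))) (at t)"
    if "t \<in> ?T" for t
    using circle_modulus_slope that by simp
  show "continuous_on {s..s + 1} (circle_modulus Q)"
    unfolding circle_modulus_def by (intro continuous_intros)
qed (auto simp: circle_modulus_def)

section \<open>Higher Mahler measures of Laurent polynomials\<close>

lemma higher_mahler_laurent_eval:
  assumes "0 \<le> s" "s \<le> 1" "(\<lambda>x. (- ln (circle_modulus Q x)) ^ k) integrable_on {s..s + 1}"
  shows "\<bar>higher_mahler k (laurent_eval Q e)\<bar> = \<bar>integral {s..s + 1} (\<lambda>x. (- ln (circle_modulus Q x)) ^ k)\<bar>"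
proof -
  let ?f = "\<lambda>x. (- ln (circle_modulus Q x)) ^ k"
  have "ln (cmod (laurent_eval Q e (cis (2 * pi * x)))) ^ k = (-1) ^ k * ?f x" for x
    by (simp add: laurent_eval_def circle_modulus_def norm_mult norm_power_int power_minus[symmetric])
  then have "higher_mahler k (laurent_eval Q e) = (-1) ^ k * integral {0..1} ?f"
    by (simp add: higher_mahler_def)
  also have "integral {0..1} ?f = integral {s..s + 1} ?f"
    using assms cis_2pi_add_of_int[of _ 1]
    by (intro integral_one_periodic_shift) (simp_all add: circle_modulus_def)
  finally show ?thesis
    by (simp add: abs_mult)
qed

lemma deriv_laurent_eval_at_root:
  assumes "z \<noteq> 0" "poly Q z = 0"
  shows "deriv (laurent_eval Q e) z = poly (pderiv Q) z * z powi e"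
proof -
  have "(laurent_eval Q e has_field_derivative of_int e * z powi (e - 1) * poly Q z + z powi e * poly (pderiv Q) z) (at z)"
    unfolding laurent_eval_def[abs_def] using assms(1)
    by (auto intro!: derivative_eq_intros poly_DERIV)
  then show ?thesis
    using assms(2) by (simp add: DERIV_imp_deriv mult.commute)
qed

lemma unit_circle_roots_laurent_eval:
  assumes "poly Q (cis (2 * pi * s)) \<noteq> 0"
  shows "{z. cmod z = 1 \<and> laurent_eval Q e z = 0} =
           (\<lambda>t. cis (2 * pi * t)) ` {t. s < t \<and> t < s + 1 \<and> poly Q (cis (2 * pi * t)) = 0}"
proof (intro equalityI subsetI)
  fix z assume "z \<in> {z. cmod z = 1 \<and> laurent_eval Q e z = 0}"
  then have z: "cmod z = 1" "poly Q z = 0"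
    by (auto simp: laurent_eval_def)
  obtain t where "s \<le> t" "t < s + 1" "z = cis (2 * pi * t)"
    using unit_circle_eq_cis_2pi[OF z(1)] by blast
  moreover from this have "t \<noteq> s"
    using assms z(2) by auto
  ultimately show "z \<in> (\<lambda>t. cis (2 * pi * t)) ` {t. s < t \<and> t < s + 1 \<and> poly Q (cis (2 * pi * t)) = 0}"
    using z(2) by auto
qed (auto simp: laurent_eval_def)

lemma laurent_eval_circle_parametrisation:
  assumes "Q \<noteq> 0"
  obtains s T A where "finite_order_zeros (circle_modulus Q) s (s + 1) T A"
    and "\<And>k. \<bar>higher_mahler k (laurent_eval Q e)\<bar> = \<bar>integral {s..s + 1} (\<lambda>x. (- ln (circle_modulus Q x)) ^ k)\<bar>"
    and "{z. cmod z = 1 \<and> laurent_eval Q e z = 0} = (\<lambda>t. cis (2 * pi * t)) ` T"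
    and "inj_on (\<lambda>t. cis (2 * pi * t)) T"
    and "\<And>t. t \<in> T \<Longrightarrow> A t = 2 * pi * cmod (deriv (laurent_eval Q e) (cis (2 * pi * t)))"
proof -
  \<comment> \<open>Starting the period at a parameter \<open>s\<close> that is not a root puts every root on the circle
      strictly inside \<open>(s, s + 1)\<close>.\<close>
  obtain s where s: "0 \<le> s" "s \<le> 1" "poly Q (cis (2 * pi * s)) \<noteq> 0"
    using poly_cis_2pi_nonzero[OF assms] .
  define T where "T = {t. s < t \<and> t < s + 1 \<and> poly Q (cis (2 * pi * t)) = 0}"
  define A where "A t = 2 * pi * cmod (poly (pderiv Q) (cis (2 * pi * t)))" for t
  have zeros: "finite_order_zeros (circle_modulus Q) s (s + 1) T A"
    unfolding T_def A_def by (rule finite_order_zeros_circle_modulus[OF assms s(3)])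
  show ?thesis
  proof (rule that[OF zeros])
    show "\<bar>higher_mahler k (laurent_eval Q e)\<bar> = \<bar>integral {s..s + 1} (\<lambda>x. (- ln (circle_modulus Q x)) ^ k)\<bar>" for k
      by (rule higher_mahler_laurent_eval[OF s(1,2) finite_order_zeros.integrable_neg_ln_power[OF zeros]])
    show "{z. cmod z = 1 \<and> laurent_eval Q e z = 0} = (\<lambda>t. cis (2 * pi * t)) ` T"
      unfolding T_def by (rule unit_circle_roots_laurent_eval[OF s(3)])
    show "inj_on (\<lambda>t. cis (2 * pi * t)) T"
      by (rule inj_on_subset[OF inj_on_cis_2pi]) (auto simp: T_def)
    show "A t = 2 * pi * cmod (deriv (laurent_eval Q e) (cis (2 * pi * t)))" if "t \<in> T" for t
      using that by (simp add: T_def A_def deriv_laurent_eval_at_root norm_mult norm_power_int)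
  qed
qed

theorem theorem1:
  fixes Q :: "complex poly" and e :: int
  assumes "Q \<noteq> 0"
  defines "P \<equiv> laurent_eval Q e"
  defines "R \<equiv> {z. cmod z = 1 \<and> P z = 0}"
  shows "((\<exists>z\<in>R. deriv P z = 0) \<longrightarrow>
            filterlim (\<lambda>k. \<bar>higher_mahler k P\<bar> / fact k) at_top sequentially) \<and>
         ((\<forall>z\<in>R. deriv P z \<noteq> 0) \<longrightarrow>
            (\<lambda>k. \<bar>higher_mahler k P\<bar> / fact k)
              \<longlonglongrightarrow> (1 / pi) * (\<Sum>z\<in>R. 1 / cmod (deriv P z)))"
proof -
  obtain s T A where zeros: "finite_order_zeros (circle_modulus Q) s (s + 1) T A"
    and mahler: "\<And>k. \<bar>higher_mahler k P\<bar> = \<bar>integral {s..s + 1} (\<lambda>x. (- ln (circle_modulus Q x)) ^ k)\<bar>"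
    and R: "R = (\<lambda>t. cis (2 * pi * t)) ` T" and inj: "inj_on (\<lambda>t. cis (2 * pi * t)) T"
    and A: "\<And>t. t \<in> T \<Longrightarrow> A t = 2 * pi * cmod (deriv P (cis (2 * pi * t)))"
    using laurent_eval_circle_parametrisation[OF assms(1), of e, folded P_def, folded R_def] by blast
  interpret finite_order_zeros "circle_modulus Q" s "s + 1" T A
    by (fact zeros)
  let ?X = "\<lambda>k. integral {s..s + 1} (\<lambda>x. (- ln (circle_modulus Q x)) ^ k) / fact k"
  have mahler_X: "\<bar>higher_mahler k P\<bar> / fact k = \<bar>?X k\<bar>" for k
    by (simp add: mahler)
  show ?thesis
  proof (intro conjI impI)
    assume "\<exists>z\<in>R. deriv P z = 0"
    then obtain t0 where "t0 \<in> T" "A t0 = 0"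
      unfolding R using A by force
    then have "filterlim ?X at_top sequentially"
      by (rule integral_neg_ln_power_over_fact_at_top)
    then show "filterlim (\<lambda>k. \<bar>higher_mahler k P\<bar> / fact k) at_top sequentially"
      unfolding mahler_X by (rule filterlim_at_top_mono) (auto intro!: always_eventually divide_right_mono)
  next
    assume "\<forall>z\<in>R. deriv P z \<noteq> 0"
    then have pos: "0 < A t" if "t \<in> T" for t
      using A[OF that] that unfolding R by auto
    then have "?X \<longlonglongrightarrow> (\<Sum>t\<in>T. 2 / A t)"
      by (rule integral_neg_ln_power_over_fact_tendsto)
    moreover have "(\<Sum>t\<in>T. 2 / A t) = (1 / pi) * (\<Sum>z\<in>R. 1 / cmod (deriv P z))"
      unfolding R using inj A by (simp add: sum.reindex sum_distrib_left)
    moreover have "0 \<le> (\<Sum>t\<in>T. 2 / A t)"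
      using pos by (simp add: sum_nonneg less_imp_le)
    ultimately show "(\<lambda>k. \<bar>higher_mahler k P\<bar> / fact k) \<longlonglongrightarrow> (1 / pi) * (\<Sum>z\<in>R. 1 / cmod (deriv P z))"
      unfolding mahler_X by (metis tendsto_rabs abs_of_nonneg)
  qed
qed

end
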